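(* Let $k\geq 2$ and $\Lambda_{\rm cr}(k)=\frac{k^k}{(k-1)^{k+1}}$. Consider the HC model with countable set of spin values $\mathbb Z$ on the Cayley tree $\Gamma^k$, associated with the graph $G$ on $\mathbb Z$ in which every vertex is adjacent to $0$ and no two vertices of $\mathbb Z_0=\mathbb Z\setminus\{0\}$ are adjacent, with activities $\lambda_j>0$. Then: (1) If the series $\sum_{j\in\mathbb Z_0}\lambda_j$ converges, with sum $\Lambda$, then for $0<\Lambda\leq\Lambda_{\rm cr}$ there exists a unique $G_k^{(2)}$-periodic Gibbs measure $\mu_0$, and it is translation-invariant; and for $\Lambda>\Lambda_{\rm cr}$ there are exactly three $G_k^{(2)}$-periodic Gibbs measures $\mu_0,\mu_1,\mu_2$, where $\mu_0$ is translation-invariant and $\mu_1,\mu_2$ are not translation-invariant. (2) If the series $\sum_{j\in\mathbb Z_0}\lambda_j$ diverges, there is no $G_k^{(2)}$-periodic Gibbs measure.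
   Context: The Cayley tree $\Gamma^k$ of order $k$ is the infinite tree in which every vertex has exactly $k+1$ neighbours; $V$ is its vertex set, identified with the group $G_k$, the free product of $k+1$ cyclic groups of order two; $G_k^{(2)}$ is the subgroup of words of even length. Fix a root $x^0$ (the identity); $|x|$ is the distance from $x^0$ and $S(x)$ the set of direct successors of $x$. A configuration $\sigma:V\to\mathbb Z$ is admissible if $\sigma(x)\sigma(y)=0$ for all nearest neighbours $x,y$. The HC Hamiltonian is $H(\sigma)=J\sum_{x\in V}\ln\lambda_{\sigma(x)}$ for admissible $\sigma$ and $+\infty$ otherwise. Gibbs measures of this model correspond one-to-one to normalisable boundary laws, which (normalised at spin $0$) are families $z_x=(z_{i,x})_{i\in\mathbb Z_0}$ of positive numbers satisfying $z_{i,x}=\lambda_i\prod_{y\in S(x)}\bigl(1+\sum_{j\in\mathbb Z_0}z_{j,y}\bigr)^{-1}$, $i\in\mathbb Z_0$. A measure is $G_k^{(2)}$-periodic if it corresponds to a solution with $z_x=z$ for $|x|$ even and $z_x=\tilde z$ for $|x|$ odd, i.e. to positive sequences $z,\tilde z$ indexed by $\mathbb Z_0$ satisfying $$z_i=\lambda_i\Bigl(1+\sum_{j\in\mathbb Z_0}\tilde z_j\Bigr)^{-k},\qquad \tilde z_i=\lambda_i\Bigl(1+\sum_{j\in\mathbb Z_0}z_j\Bigr)^{-k},\qquad i\in\mathbb Z_0,$$ and it is normalisable if $\sum_i z_i^{(k+1)/k}<\infty$ and $\sum_i\tilde z_i^{(k+1)/k}<\infty$. Translation-invariant measures correspond to solutions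 with $z=\tilde z$. *)

theory Defs
  imports "HOL-Analysis.Analysis"
begin

definition Z0 :: "int set" where
  "Z0 = {j. j \<noteq> 0}"

definition Lambda_cr :: "nat \<Rightarrow> real" where
  "Lambda_cr k = real k ^ k / (real k - 1) ^ (k + 1)"

text \<open>Boundary-law equations for a G_k^(2)-periodic solution (z on even levels,
  zt on odd levels), normalised at spin 0 (z 0 = zt 0 = 1).  The sums over Z0
  are required to converge (otherwise the equations are meaningless).\<close>
definition periodic_bl :: "nat \<Rightarrow> (int \<Rightarrow> real) \<Rightarrow> (int \<Rightarrow> real) \<Rightarrow> (int \<Rightarrow> real) \<Rightarrow> bool" where
  "periodic_bl k lam z zt \<longleftrightarrow>
     z 0 = 1 \<and> zt 0 = 1 \<and>
     (\<forall>i\<in>Z0. z i > 0 \<and> zt i > 0) \<and>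
     z summable_on Z0 \<and> zt summable_on Z0 \<and>
     (\<forall>i\<in>Z0. z i = lam i / (1 + infsum zt Z0) ^ k) \<and>
     (\<forall>i\<in>Z0. zt i = lam i / (1 + infsum z Z0) ^ k)"

definition normalisable :: "nat \<Rightarrow> (int \<Rightarrow> real) \<Rightarrow> (int \<Rightarrow> real) \<Rightarrow> bool" where
  "normalisable k z zt \<longleftrightarrow>
     (\<lambda>i. z i powr ((real k + 1) / real k)) summable_on Z0 \<and>
     (\<lambda>i. zt i powr ((real k + 1) / real k)) summable_on Z0"

text \<open>The G_k^(2)-periodic Gibbs measures of the HC model, identified (via the
  one-to-one correspondence with normalisable boundary laws) with the
  normalisable periodic solutions (z, zt).\<close>
definition periodic_gibbs :: "nat \<Rightarrow> (int \<Rightarrow> real) \<Rightarrow> ((int \<Rightarrow> real) \<times> (int \<Rightarrow> real)) set" where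
  "periodic_gibbs k lam = {(z, zt). periodic_bl k lam z zt \<and> normalisable k z zt}"

definition transl_inv :: "(int \<Rightarrow> real) \<times> (int \<Rightarrow> real) \<Rightarrow> bool" where
  "transl_inv p \<longleftrightarrow> fst p = snd p"

end

theory Submission
  imports Defs
begin

text \<open>Summing the boundary-law equations over \<open>Z0\<close> shows that a periodic boundary law is
  determined by the sums \<open>S\<close> and \<open>T\<close> of its values on even and odd levels, which satisfy
  \<open>S (1 + T)^k = \<Lambda> = T (1 + S)^k\<close> with \<open>\<Lambda> = \<Sum>\<lambda>\<^sub>j\<close>; conversely every positive solution
  of this system gives a normalisable boundary law, and if \<open>\<Sum>\<lambda>\<^sub>j\<close> diverges there is none.
  The symmetric solution \<open>S = T\<close> exists and is unique. A solution with \<open>S > T\<close> is determined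
  by \<open>t = (1 + S) / (1 + T) > 1\<close>, and then \<open>\<Lambda> = g\<^sub>k(t)^k / (t g\<^sub>k\<^sub>-\<^sub>1(t)^(k+1))\<close>, where
  \<open>g\<^sub>m(t) = 1 + t + \<dots> + t^(m-1)\<close>. As a function of \<open>t\<close> this equals \<open>\<Lambda>\<^sub>c\<^sub>r\<close> at \<open>t = 1\<close>, is
  unbounded, and is strictly increasing: its logarithmic derivative has the sign of
  \<open>g\<^sub>k(t)^2 - k^2 t^(k-1)\<close>, which is positive by AM-GM. Hence asymmetric solutions exist only
  for \<open>\<Lambda> > \<Lambda>\<^sub>c\<^sub>r\<close>, and then they form exactly one pair \<open>(S, T), (T, S)\<close>.\<close>

section \<open>Geometric sums\<close>

definition geom_sum :: "nat \<Rightarrow> real \<Rightarrow> real" where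
  "geom_sum m t = (\<Sum>j<m. t ^ j)"

lemma geom_sum_pos: "0 < t \<Longrightarrow> 0 < m \<Longrightarrow> 0 < geom_sum m t"
  unfolding geom_sum_def by (intro sum_pos) auto

lemma geom_sum_closed_form: "geom_sum m t * (t - 1) = t ^ m - 1"
  unfolding geom_sum_def using power_diff_1_eq[of t m] by (simp add: mult.commute)

lemma geom_sum_Suc: "geom_sum (Suc m) t = geom_sum m t + t ^ m"
  unfolding geom_sum_def by simp

lemma geom_sum_Suc_shift: "geom_sum (Suc m) t = 1 + t * geom_sum m t"
  unfolding geom_sum_def by (subst sum.lessThan_Suc_shift) (simp add: sum_distrib_left)

lemma geom_sum_one [simp]: "geom_sum m 1 = real m"
  unfolding geom_sum_def by simp

lemma geom_sum_le: "1 \<le> t \<Longrightarrow> geom_sum m t \<le> real m * t ^ (m - 1)"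
  unfolding geom_sum_def using sum_mono[of "{..<m}" "\<lambda>j. t ^ j" "\<lambda>_. t ^ (m - 1)"]
  by (simp add: power_increasing)

lemma geom_sum_gt_geometric_mean:
  fixes r :: real
  assumes "0 < r" "r \<noteq> 1" "2 \<le> k"
  shows "real k * r ^ (k - 1) < geom_sum k (r\<^sup>2)"
proof -
  txt \<open>Pair the \<open>j\<close>-th and \<open>(k - 1 - j)\<close>-th terms; each pair is at least \<open>2 r^(k-1)\<close>, strictly
    for \<open>j = 0\<close>.\<close>
  have sq: "(r\<^sup>2) ^ n = (r ^ n)\<^sup>2" for n :: nat
    by (simp add: mult.commute flip: power_mult)
  have pair: "2 * r ^ (k - 1) \<le> (r\<^sup>2) ^ j + (r\<^sup>2) ^ (k - Suc j)" if "j < k" for j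
  proof -
    have "r ^ j * r ^ (k - Suc j) = r ^ (k - 1)"
      using that by (simp flip: power_add)
    moreover have "0 \<le> (r ^ j - r ^ (k - Suc j))\<^sup>2" by simp
    ultimately show ?thesis
      unfolding sq by (simp add: power2_eq_square algebra_simps)
  qed
  have "r ^ (k - 1) \<noteq> 1"
    using assms power_eq_iff_eq_base[of "k - 1" r 1] by auto
  then have "0 < (1 - r ^ (k - 1))\<^sup>2" by simp
  then have pair0: "2 * r ^ (k - 1) < 1 + (r\<^sup>2) ^ (k - 1)"
    unfolding sq by (simp add: power2_eq_square algebra_simps)
  have "(\<Sum>j<k. 2 * r ^ (k - 1)) < (\<Sum>j<k. (r\<^sup>2) ^ j + (r\<^sup>2) ^ (k - Suc j))"
    by (rule sum_strict_mono_ex1) (use pair pair0 assms in \<open>auto intro!: bexI[of _ 0]\<close>)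
  also have "\<dots> = 2 * geom_sum k (r\<^sup>2)"
    unfolding geom_sum_def sum.distrib sum.nat_diff_reindex by simp
  finally show ?thesis by simp
qed

section \<open>The level of the asymmetric solutions\<close>

text \<open>The value of \<open>\<Lambda>\<close> for which the reduced system below has the solution \<open>ratio_point k t\<close>,
  the one above the diagonal with \<open>(1 + S) / (1 + T) = t\<close>.\<close>
definition asym_level :: "nat \<Rightarrow> real \<Rightarrow> real" where
  "asym_level k t = geom_sum k t ^ k / (t * geom_sum (k - 1) t ^ (k + 1))"

lemma asym_level_pos: "0 < t \<Longrightarrow> 2 \<le> k \<Longrightarrow> 0 < asym_level k t"
  unfolding asym_level_def using geom_sum_pos[of t k] geom_sum_pos[of t "k - 1"] by simp

lemma asym_level_one: "2 \<le> k \<Longrightarrow> asym_level k 1 = Lambda_cr k"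
  unfolding asym_level_def Lambda_cr_def by (simp add: of_nat_diff)

lemma continuous_on_asym_level: "2 \<le> k \<Longrightarrow> continuous_on {0<..} (asym_level k)"
  unfolding asym_level_def geom_sum_def using geom_sum_pos
  by (intro continuous_on_sum continuous_intros) (auto simp: geom_sum_def less_imp_neq[symmetric])

lemma asym_level_closed_form:
  assumes "1 < t" "2 \<le> k"
  shows "asym_level k t = (t - 1) * (t ^ k - 1) ^ k / (t * (t ^ (k - 1) - 1) ^ (k + 1))"
proof -
  have "(t - 1) ^ (k + 1) \<noteq> 0" using assms by simp
  then have "asym_level k t = (t - 1) ^ (k + 1) * geom_sum k t ^ k
      / ((t - 1) ^ (k + 1) * (t * geom_sum (k - 1) t ^ (k + 1)))"
    unfolding asym_level_def by (rule mult_divide_mult_cancel_left[symmetric])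
  also have "\<dots> = (t - 1) * (geom_sum k t * (t - 1)) ^ k / (t * (geom_sum (k - 1) t * (t - 1)) ^ (k + 1))"
    by (simp add: power_mult_distrib power_add mult_ac)
  finally show ?thesis by (simp only: geom_sum_closed_form)
qed

lemma ln_asym_level:
  assumes "1 < t" "2 \<le> k"
  shows "ln (asym_level k t) =
    ln (t - 1) + real k * ln (t ^ k - 1) - ln t - (real k + 1) * ln (t ^ (k - 1) - 1)"
proof -
  have "1 < t ^ (k - 1)" "1 < t ^ k" using assms by simp_all
  then have "t ^ (k - 1) \<noteq> 1" "t ^ k \<noteq> 1" by simp_all
  with assms show ?thesis
    by (simp add: asym_level_closed_form ln_mult ln_div ln_realpow; simp add: algebra_simps)
qed

lemma asym_level_log_derivative_pos:
  assumes "1 < t" "2 \<le> k"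
  shows "0 < 1 / (t - 1) + (real k)\<^sup>2 * t ^ (k - 1) / (t ^ k - 1) - 1 / t
    - ((real k)\<^sup>2 - 1) * t ^ (k - 1) / (t * (t ^ (k - 1) - 1))"
proof -
  define a where "a = t ^ (k - 1)"
  obtain m where m: "k = m + 2" using assms by (metis le_add_diff_inverse2)
  have ta: "t ^ k = t * a" unfolding a_def m by simp
  have a1: "1 < a" unfolding a_def using assms by simp
  have ta1: "1 < t * a" using a1 assms by (simp add: less_1_mult)
  have nz: "t \<noteq> 0" "t - 1 \<noteq> 0" "t * a - 1 \<noteq> 0" "a - 1 \<noteq> 0" using assms a1 ta1 by auto
  have "real k * sqrt t ^ (k - 1) < geom_sum k t"
    using geom_sum_gt_geometric_mean[of "sqrt t" k] assms by simp
  then have "(real k * sqrt t ^ (k - 1))\<^sup>2 < (geom_sum k t)\<^sup>2"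
    by (rule power_strict_mono) (use assms in auto)
  moreover have "(sqrt t ^ (k - 1))\<^sup>2 = a"
    unfolding a_def using assms by (simp flip: real_sqrt_power)
  ultimately have "(real k)\<^sup>2 * a < (geom_sum k t)\<^sup>2"
    by (simp add: power_mult_distrib)
  then have "(real k)\<^sup>2 * a * (t - 1)\<^sup>2 < (t * a - 1)\<^sup>2"
    using assms by (simp flip: ta geom_sum_closed_form add: power_mult_distrib)
  moreover have "1 / (t - 1) + (real k)\<^sup>2 * a / (t * a - 1) - 1 / t
      - ((real k)\<^sup>2 - 1) * a / (t * (a - 1))
      = ((t * a - 1)\<^sup>2 - (real k)\<^sup>2 * a * (t - 1)\<^sup>2) / (t * (t - 1) * (t * a - 1) * (a - 1))"
    using nz by (simp add: divide_simps) algebra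
  ultimately show ?thesis
    unfolding ta a_def[symmetric] using assms a1 ta1 by simp
qed

lemma asym_level_has_pos_derivative:
  assumes "1 < t" "2 \<le> k"
  shows "\<exists>D>0. (asym_level k has_real_derivative D) (at t)"
proof -
  define G where "G s = ln (s - 1) + real k * ln (s ^ k - 1) - ln s - (real k + 1) * ln (s ^ (k - 1) - 1)"
    for s :: real
  define G' where "G' = 1 / (t - 1) + (real k)\<^sup>2 * t ^ (k - 1) / (t ^ k - 1) - 1 / t
    - ((real k)\<^sup>2 - 1) * t ^ (k - 1) / (t * (t ^ (k - 1) - 1))"
  have exp_G: "exp (G s) = asym_level k s" if "1 < s" for s
    using ln_asym_level[OF that assms(2)] asym_level_pos[of s k] that assms
    unfolding G_def by (metis exp_ln less_trans zero_less_one)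
  obtain m where m: "k = m + 2" using assms by (metis le_add_diff_inverse2)
  have "t ^ (k - Suc (Suc 0)) = t ^ (k - 1) / t"
    using assms unfolding m by simp
  moreover have "1 < t ^ (k - 1)" "1 < t ^ k"
    using assms by simp_all
  ultimately have "(G has_real_derivative G') (at t)"
    unfolding G_def G'_def using assms
    by (auto intro!: derivative_eq_intros) (simp add: field_simps power2_eq_square)
  then have "((\<lambda>s. exp (G s)) has_real_derivative asym_level k t * G') (at t)"
    using DERIV_fun_exp exp_G assms by fastforce
  then have "(asym_level k has_real_derivative asym_level k t * G') (at t)"
    by (rule has_field_derivative_transform_within_open[where S = "{1<..}"]) (use assms exp_G in auto)
  moreover have "0 < asym_level k t * G'"
    unfolding G'_def using asym_level_log_derivative_pos[OF assms] asym_level_pos[of t k] assms by simp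
  ultimately show ?thesis by blast
qed

lemma strict_mono_on_asym_level:
  assumes "2 \<le> k"
  shows "strict_mono_on {1..} (asym_level k)"
proof (rule strict_mono_onI)
  fix r s :: real
  assume "r \<in> {1..}" "s \<in> {1..}" "r < s"
  show "asym_level k r < asym_level k s"
  proof (rule DERIV_pos_imp_increasing_open[OF \<open>r < s\<close>])
    show "\<exists>D. (asym_level k has_real_derivative D) (at x) \<and> 0 < D" if "r < x" "x < s" for x
      using asym_level_has_pos_derivative[of x k] assms that \<open>r \<in> {1..}\<close> by auto
    show "continuous_on {r..s} (asym_level k)"
      using continuous_on_asym_level[OF assms]
      by (rule continuous_on_subset) (use \<open>r \<in> {1..}\<close> in auto)
  qed
qed

lemma asym_level_ge:
  assumes "1 \<le> t" "2 \<le> k"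
  shows "t / (real k - 1) \<le> asym_level k t"
proof -
  obtain m where m: "k = m + 2" using assms by (metis le_add_diff_inverse2)
  define g where "g = geom_sum (k - 1) t"
  have g: "0 < g" unfolding g_def using geom_sum_pos[of t "k - 1"] assms by simp
  have "t / (real k - 1) = t ^ (m + 1) / (real (m + 1) * t ^ m)"
    using assms m by simp
  also have "\<dots> \<le> t ^ (m + 1) / g"
    using assms g geom_sum_le[of t "m + 1"] by (intro divide_left_mono) (auto simp: g_def m)
  also have "\<dots> = (t * g) ^ k / (t * g ^ (k + 1))"
    using assms g m by (simp add: power_mult_distrib field_simps)
  also have "\<dots> \<le> asym_level k t"
    unfolding asym_level_def g_def[symmetric]
  proof (intro divide_right_mono power_mono)
    show "t * g \<le> geom_sum k t"
      using geom_sum_Suc_shift[of "m + 1" t] g by (simp add: g_def m)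
  qed (use assms g in auto)
  finally show ?thesis .
qed

section \<open>The reduced system\<close>

text \<open>\<open>S\<close> and \<open>T\<close> are the sums over \<open>Z0\<close> of a periodic boundary law on even and odd levels,
  \<open>L\<close> is the sum of the activities.\<close>
definition reduced_solutions :: "nat \<Rightarrow> real \<Rightarrow> (real \<times> real) set" where
  "reduced_solutions k L = {(S, T). 0 < S \<and> 0 < T \<and> S * (1 + T) ^ k = L \<and> T * (1 + S) ^ k = L}"

lemma diagonal_equation_unique:
  fixes L :: real
  assumes "0 < L"
  shows "\<exists>!x. 0 < x \<and> x * (1 + x) ^ k = L"
proof -
  have "strict_mono_on {0..} (\<lambda>x::real. x * (1 + x) ^ k)"
    by (rule strict_mono_onI) (auto intro!: mult_less_le_imp_less power_mono)
  then have inj: "inj_on (\<lambda>x::real. x * (1 + x) ^ k) {0..}"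
    by (rule strict_mono_on_imp_inj_on)
  have "L \<le> L * (1 + L) ^ k"
    using assms by (simp add: one_le_power)
  moreover have "continuous_on {0..L} (\<lambda>x::real. x * (1 + x) ^ k)"
    by (intro continuous_intros)
  ultimately obtain x where x: "0 \<le> x" "x \<le> L" "x * (1 + x) ^ k = L"
    using IVT'[of "\<lambda>x. x * (1 + x) ^ k" 0 L L] assms by auto
  then have "0 < x" using assms by (cases "x = 0") auto
  with x inj show ?thesis by (metis (no_types, lifting) atLeast_iff inj_on_def less_imp_le)
qed

lemma swap_mem_reduced_solutions:
  "p \<in> reduced_solutions k L \<Longrightarrow> prod.swap p \<in> reduced_solutions k L"
  unfolding reduced_solutions_def by auto

definition ratio_point :: "nat \<Rightarrow> real \<Rightarrow> real \<times> real" where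
  "ratio_point k t = (t ^ (k - 1) / geom_sum (k - 1) t, 1 / (t * geom_sum (k - 1) t))"

lemma ratio_point_mem_reduced_solutions:
  assumes "1 < t" "2 \<le> k"
  shows "ratio_point k t \<in> reduced_solutions k (asym_level k t)"
    and "snd (ratio_point k t) < fst (ratio_point k t)"
proof -
  define g where "g = geom_sum (k - 1) t"
  have g: "0 < g" unfolding g_def using geom_sum_pos[of t "k - 1"] assms by simp
  have k1: "k = Suc (k - 1)" using assms by simp
  have tk: "t ^ k = t * t ^ (k - 1)" by (subst k1) simp
  have "geom_sum k t = 1 + t * g" "geom_sum k t = g + t ^ (k - 1)"
    unfolding g_def by (subst k1, simp only: geom_sum_Suc_shift, subst k1, simp only: geom_sum_Suc)
  then have "1 + 1 / (t * g) = geom_sum k t / (t * g)" "1 + t ^ (k - 1) / g = geom_sum k t / g"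
    using g assms by (simp_all add: field_simps)
  then show "ratio_point k t \<in> reduced_solutions k (asym_level k t)"
    unfolding ratio_point_def reduced_solutions_def asym_level_def g_def[symmetric] using g assms
    by (simp add: power_divide power_mult_distrib tk field_simps)
  have "1 < t * t ^ (k - 1)" using assms tk one_less_power[of t k] by simp
  then show "snd (ratio_point k t) < fst (ratio_point k t)"
    unfolding ratio_point_def g_def[symmetric] using g assms by (simp add: field_simps)
qed

lemma reduced_solution_eq_ratio_point:
  assumes "(S, T) \<in> reduced_solutions k L" "T < S" "2 \<le> k"
  shows "\<exists>t>1. asym_level k t = L \<and> (S, T) = ratio_point k t"
proof -
  have ST: "0 < S" "0 < T" "S * (1 + T) ^ k = L" "T * (1 + S) ^ k = L"
    using assms(1) unfolding reduced_solutions_def by auto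
  define t where "t = (1 + S) / (1 + T)"
  have t: "1 < t" "1 + S = t * (1 + T)" unfolding t_def using ST assms(2) by simp_all
  define g where "g = geom_sum (k - 1) t"
  have g: "0 < g" unfolding g_def using geom_sum_pos[of t "k - 1"] t assms by simp
  have k1: "k = Suc (k - 1)" using assms by simp
  have tk: "t ^ k = t * t ^ (k - 1)" by (subst k1) simp
  have "T * t ^ k * (1 + T) ^ k = T * (1 + S) ^ k"
    unfolding t(2) by (simp add: power_mult_distrib)
  also have "\<dots> = S * (1 + T) ^ k" using ST by simp
  finally have S_eq: "S = T * t ^ k" using ST(2) by (simp add: add_pos_pos)
  have "t ^ k - t = t * (t ^ (k - 1) - 1)"
    unfolding tk by (simp add: algebra_simps)
  also have "\<dots> = t * g * (t - 1)"
    using geom_sum_closed_form[of "k - 1" t] unfolding g_def by simp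
  finally have tk_diff: "t ^ k - t = t * g * (t - 1)" .
  have "T * (t ^ k - t) = t - 1"
    using t(2) unfolding S_eq by (simp add: algebra_simps)
  then have "(T * t * g) * (t - 1) = 1 * (t - 1)" unfolding tk_diff by (simp add: mult_ac)
  then have "T * t * g = 1" using t(1) by (subst (asm) mult_right_cancel) auto
  then have T_eq: "T = 1 / (t * g)" using t(1) g by (simp add: field_simps)
  have "(S, T) = ratio_point k t"
    unfolding ratio_point_def g_def[symmetric] S_eq T_eq tk using t(1) by simp
  moreover have "asym_level k t = L"
    using ratio_point_mem_reduced_solutions(1)[OF t(1) assms(3)] ST
    unfolding reduced_solutions_def by (simp flip: \<open>(S, T) = ratio_point k t\<close>)
  ultimately show ?thesis using t by blast
qed

lemma reduced_solutions_eq: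
  assumes "2 \<le> k" "0 < x" "x * (1 + x) ^ k = L"
  shows "reduced_solutions k L = insert (x, x)
    (\<Union>t\<in>{t. 1 < t \<and> asym_level k t = L}. {ratio_point k t, prod.swap (ratio_point k t)})"
    (is "_ = ?rhs")
proof
  show "reduced_solutions k L \<subseteq> ?rhs"
  proof
    fix p assume p: "p \<in> reduced_solutions k L"
    obtain S T where ST: "p = (S, T)" by (cases p)
    consider "T < S" | "S < T" | "S = T" by linarith
    then show "p \<in> ?rhs"
    proof cases
      case 1
      then show ?thesis
        using reduced_solution_eq_ratio_point[OF p[unfolded ST] _ assms(1)] ST by blast
    next
      case 2
      have "(T, S) \<in> reduced_solutions k L" using swap_mem_reduced_solutions[OF p] ST by simp
      then obtain t where "1 < t" "asym_level k t = L" "(T, S) = ratio_point k t"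
        using reduced_solution_eq_ratio_point[OF _ 2 assms(1)] by blast
      then show ?thesis using ST by (force simp flip: \<open>(T, S) = ratio_point k t\<close>)
    next
      case 3
      have "0 < L" unfolding assms(3)[symmetric] using assms(2) by simp
      moreover have "0 < S" "S * (1 + S) ^ k = L"
        using p ST 3 unfolding reduced_solutions_def by auto
      ultimately have "S = x" using diagonal_equation_unique[of L k] assms(2,3) by blast
      then show ?thesis using ST 3 by simp
    qed
  qed
  have "(x, x) \<in> reduced_solutions k L"
    using assms unfolding reduced_solutions_def by simp
  moreover have "ratio_point k t \<in> reduced_solutions k L"
      and "prod.swap (ratio_point k t) \<in> reduced_solutions k L"
    if "1 < t" "asym_level k t = L" for t
    using ratio_point_mem_reduced_solutions(1)[OF that(1) assms(1), unfolded that(2)]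
    by (simp_all add: swap_mem_reduced_solutions)
  ultimately show "?rhs \<subseteq> reduced_solutions k L" by blast
qed

lemma Lambda_cr_less_asym_level:
  assumes "1 < t" "2 \<le> k"
  shows "Lambda_cr k < asym_level k t"
  using strict_mono_onD[OF strict_mono_on_asym_level[OF assms(2)], of 1 t] assms
  by (simp add: asym_level_one)

lemma asym_level_eq_unique:
  assumes "2 \<le> k" "Lambda_cr k < L"
  shows "\<exists>!t. 1 < t \<and> asym_level k t = L"
proof -
  define b where "b = 1 + L * (real k - 1)"
  have "0 < L" using asym_level_pos[of 1 k] asym_level_one assms by simp
  then have b: "1 \<le> b" "L \<le> b / (real k - 1)"
    unfolding b_def using assms by (simp_all add: field_simps)
  then have "L \<le> asym_level k b" using asym_level_ge[of b k] assms by simp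
  moreover have "continuous_on {1..b} (asym_level k)"
    using continuous_on_asym_level[OF assms(1)] by (rule continuous_on_subset) auto
  ultimately obtain t where t: "1 \<le> t" "asym_level k t = L"
    using IVT'[of "asym_level k" 1 L b] b assms by (auto simp: asym_level_one)
  then have "1 < t" using assms by (cases "t = 1") (auto simp: asym_level_one)
  moreover have "inj_on (asym_level k) {1..}"
    using strict_mono_on_asym_level[OF assms(1)] by (rule strict_mono_on_imp_inj_on)
  then have "s = t" if "1 < s" "asym_level k s = L" for s
    using inj_onD[of "asym_level k" _ s t] that t by auto
  ultimately show ?thesis using t by blast
qed

lemma reduced_solutions_subcritical:
  assumes "2 \<le> k" "0 < L" "L \<le> Lambda_cr k"
  shows "\<exists>x. reduced_solutions k L = {(x, x)}"
proof -
  obtain x where x: "0 < x" "x * (1 + x) ^ k = L"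
    using diagonal_equation_unique[OF assms(2)] by blast
  have "{t. 1 < t \<and> asym_level k t = L} = {}"
    using Lambda_cr_less_asym_level assms by force
  then show ?thesis using reduced_solutions_eq[OF assms(1) x] by auto
qed

lemma reduced_solutions_supercritical:
  assumes "2 \<le> k" "Lambda_cr k < L"
  shows "\<exists>x S T. T < S \<and> reduced_solutions k L = {(x, x), (S, T), (T, S)}"
proof -
  have "0 < L" using asym_level_pos[of 1 k] asym_level_one assms by simp
  then obtain x where x: "0 < x" "x * (1 + x) ^ k = L"
    using diagonal_equation_unique by blast
  obtain t where t: "1 < t" "{t. 1 < t \<and> asym_level k t = L} = {t}"
    using asym_level_eq_unique[OF assms] by blast
  obtain S T where ST: "ratio_point k t = (S, T)" by (cases "ratio_point k t")
  have "T < S" using ratio_point_mem_reduced_solutions(2)[OF t(1) assms(1)] ST by simp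
  moreover have "reduced_solutions k L = {(x, x), (S, T), (T, S)}"
    using reduced_solutions_eq[OF assms(1) x] t(2) ST by simp
  ultimately show ?thesis by blast
qed

section \<open>Periodic boundary laws\<close>

lemma infsum_pos:
  fixes f :: "'a \<Rightarrow> real"
  assumes "f summable_on A" "\<And>x. x \<in> A \<Longrightarrow> 0 \<le> f x" "a \<in> A" "0 < f a"
  shows "0 < infsum f A"
proof -
  have "infsum f {a} \<le> infsum f A"
    by (rule infsum_mono_neutral) (use assms in auto)
  then show ?thesis using assms(4) by simp
qed

lemma summable_on_powr:
  fixes f :: "'a \<Rightarrow> real"
  assumes "f summable_on A" "\<And>x. x \<in> A \<Longrightarrow> 0 \<le> f x" "1 \<le> p"
  shows "(\<lambda>x. f x powr p) summable_on A"
proof (rule summable_on_comparison_test)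
  show "(\<lambda>x. f x * infsum f A powr (p - 1)) summable_on A"
    using assms(1) by (rule summable_on_cmult_left)
  fix x assume x: "x \<in> A"
  then have "infsum f {x} \<le> infsum f A"
    by (intro infsum_mono_neutral) (use assms in auto)
  then have "f x \<le> infsum f A" by simp
  then have "f x * f x powr (p - 1) \<le> f x * infsum f A powr (p - 1)"
    using assms x by (intro mult_left_mono powr_mono2) auto
  moreover have "f x powr p = f x * f x powr (p - 1)"
    using assms(2)[OF x] by (cases "f x = 0") (simp_all add: powr_mult_base)
  ultimately show "f x powr p \<le> f x * infsum f A powr (p - 1)" by simp
  show "0 \<le> f x powr p" by simp
qed

fun boundary_law ::
  "nat \<Rightarrow> (int \<Rightarrow> real) \<Rightarrow> real \<times> real \<Rightarrow> (int \<Rightarrow> real) \<times> (int \<Rightarrow> real)"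
where
  "boundary_law k lam (S, T) =
     ((\<lambda>i. if i = 0 then 1 else lam i / (1 + T) ^ k),
      (\<lambda>i. if i = 0 then 1 else lam i / (1 + S) ^ k))"

lemma has_sum_boundary_law:
  assumes "lam summable_on Z0" "p \<in> reduced_solutions k (infsum lam Z0)"
  shows "(fst (boundary_law k lam p) has_sum fst p) Z0"
    and "(snd (boundary_law k lam p) has_sum snd p) Z0"
proof -
  obtain S T where p: "p = (S, T)" by (cases p)
  have ST: "S = infsum lam Z0 / (1 + T) ^ k" "T = infsum lam Z0 / (1 + S) ^ k"
    using assms(2) unfolding p reduced_solutions_def by (auto simp: field_simps add_pos_pos)
  have lam: "(lam has_sum infsum lam Z0) Z0" using assms(1) by simp
  show "(fst (boundary_law k lam p) has_sum fst p) Z0"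
    using has_sum_divide_const[OF lam, of "(1 + T) ^ k"] ST(1) unfolding p
    by (subst has_sum_cong[where g = "\<lambda>i. lam i / (1 + T) ^ k"]) (auto simp: Z0_def)
  show "(snd (boundary_law k lam p) has_sum snd p) Z0"
    using has_sum_divide_const[OF lam, of "(1 + S) ^ k"] ST(2) unfolding p
    by (subst has_sum_cong[where g = "\<lambda>i. lam i / (1 + S) ^ k"]) (auto simp: Z0_def)
qed

lemma boundary_law_mem_periodic_gibbs:
  assumes "0 < k" "\<forall>j. 0 < lam j" "lam summable_on Z0" "p \<in> reduced_solutions k (infsum lam Z0)"
  shows "boundary_law k lam p \<in> periodic_gibbs k lam"
proof -
  obtain S T where p: "p = (S, T)" by (cases p)
  have "0 < S" "0 < T" using assms(4) unfolding p reduced_solutions_def by auto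
  define z where "z = fst (boundary_law k lam p)"
  define zt where "zt = snd (boundary_law k lam p)"
  have "(z has_sum S) Z0" "(zt has_sum T) Z0"
    unfolding z_def zt_def using has_sum_boundary_law[OF assms(3,4)] p by simp_all
  then have sums: "z summable_on Z0" "zt summable_on Z0" "infsum z Z0 = S" "infsum zt Z0 = T"
    by (auto simp: summable_on_def infsumI)
  have z: "z i = lam i / (1 + T) ^ k" "zt i = lam i / (1 + S) ^ k" if "i \<in> Z0" for i
    using that unfolding z_def zt_def p Z0_def by simp_all
  have pos: "0 < z i" "0 < zt i" if "i \<in> Z0" for i
    unfolding z[OF that] using assms(2) \<open>0 < S\<close> \<open>0 < T\<close> by simp_all
  have "periodic_bl k lam z zt"
    unfolding periodic_bl_def sums(3,4) using sums(1,2) z pos by (simp add: z_def zt_def p)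
  moreover have "1 \<le> (real k + 1) / real k" using assms(1) by simp
  then have "normalisable k z zt"
    unfolding normalisable_def using sums(1,2) pos by (simp add: summable_on_powr less_imp_le)
  ultimately show ?thesis
    unfolding periodic_gibbs_def z_def zt_def by (simp add: case_prod_unfold)
qed

lemma periodic_gibbs_imp_summable:
  assumes "(z, zt) \<in> periodic_gibbs k lam"
  shows "lam summable_on Z0"
proof -
  let ?T = "infsum zt Z0"
  have "periodic_bl k lam z zt" using assms unfolding periodic_gibbs_def by simp
  then have z: "z summable_on Z0" "\<forall>i\<in>Z0. z i = lam i / (1 + ?T) ^ k" and "\<forall>i\<in>Z0. 0 < zt i"
    unfolding periodic_bl_def by blast+
  then have "0 \<le> ?T" by (intro infsum_nonneg) (simp add: less_imp_le)
  then have "lam summable_on Z0 \<longleftrightarrow> (\<lambda>i. z i * (1 + ?T) ^ k) summable_on Z0"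
    using z(2) by (intro summable_on_cong) simp
  then show ?thesis using summable_on_cmult_left[OF z(1)] by blast
qed

lemma periodic_gibbs_eq_boundary_law:
  assumes "\<forall>j. 0 < lam j" "(z, zt) \<in> periodic_gibbs k lam"
  shows "(infsum z Z0, infsum zt Z0) \<in> reduced_solutions k (infsum lam Z0)"
    and "(z, zt) = boundary_law k lam (infsum z Z0, infsum zt Z0)"
proof -
  define S where "S = infsum z Z0"
  define T where "T = infsum zt Z0"
  have bl: "periodic_bl k lam z zt" using assms unfolding periodic_gibbs_def by simp
  have lam: "(lam has_sum infsum lam Z0) Z0"
    using periodic_gibbs_imp_summable[OF assms(2)] by simp
  have "0 < infsum lam Z0"
    using lam assms(1) by (intro infsum_pos[of _ _ 1]) (auto simp: Z0_def summable_on_def less_imp_le)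
  have pos: "\<forall>i\<in>Z0. 0 < z i \<and> 0 < zt i" using bl unfolding periodic_bl_def by blast
  have "0 \<le> S" "0 \<le> T"
    unfolding S_def T_def using pos by (simp_all add: infsum_nonneg less_imp_le)
  have z: "z i = lam i / (1 + T) ^ k" and zt: "zt i = lam i / (1 + S) ^ k" if "i \<in> Z0" for i
    using bl that unfolding periodic_bl_def S_def T_def by auto
  have "S = infsum (\<lambda>i. lam i / (1 + T) ^ k) Z0"
    unfolding S_def by (rule infsum_cong) (rule z)
  also have "\<dots> = infsum lam Z0 / (1 + T) ^ k"
    by (rule infsumI) (rule has_sum_divide_const[OF lam])
  finally have S_eq: "S * (1 + T) ^ k = infsum lam Z0"
    using \<open>0 \<le> T\<close> by (simp add: field_simps)
  have "T = infsum (\<lambda>i. lam i / (1 + S) ^ k) Z0"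
    unfolding T_def by (rule infsum_cong) (rule zt)
  also have "\<dots> = infsum lam Z0 / (1 + S) ^ k"
    by (rule infsumI) (rule has_sum_divide_const[OF lam])
  finally have T_eq: "T * (1 + S) ^ k = infsum lam Z0"
    using \<open>0 \<le> S\<close> by (simp add: field_simps)
  have "0 < S" "0 < T"
    using S_eq T_eq \<open>0 < infsum lam Z0\<close> \<open>0 \<le> S\<close> \<open>0 \<le> T\<close>
    by (auto simp: order.order_iff_strict)
  with S_eq T_eq show "(infsum z Z0, infsum zt Z0) \<in> reduced_solutions k (infsum lam Z0)"
    unfolding reduced_solutions_def S_def T_def by simp
  have "z 0 = 1" "zt 0 = 1" using bl unfolding periodic_bl_def by simp_all
  with z zt show "(z, zt) = boundary_law k lam (infsum z Z0, infsum zt Z0)"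
    unfolding S_def[symmetric] T_def[symmetric] by (auto simp: Z0_def fun_eq_iff)
qed

lemma periodic_gibbs_eq_image:
  assumes "0 < k" "\<forall>j. 0 < lam j" "lam summable_on Z0"
  shows "periodic_gibbs k lam = boundary_law k lam ` reduced_solutions k (infsum lam Z0)"
proof
  show "periodic_gibbs k lam \<subseteq> boundary_law k lam ` reduced_solutions k (infsum lam Z0)"
    using periodic_gibbs_eq_boundary_law[OF assms(2)] by fast
  show "boundary_law k lam ` reduced_solutions k (infsum lam Z0) \<subseteq> periodic_gibbs k lam"
    using boundary_law_mem_periodic_gibbs[OF assms] by blast
qed

lemma inj_on_boundary_law:
  assumes "lam summable_on Z0"
  shows "inj_on (boundary_law k lam) (reduced_solutions k (infsum lam Z0))"
proof (rule inj_onI)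
  fix p q
  assume p: "p \<in> reduced_solutions k (infsum lam Z0)" and q: "q \<in> reduced_solutions k (infsum lam Z0)"
    and eq: "boundary_law k lam p = boundary_law k lam q"
  have "fst p = fst q"
    using has_sum_boundary_law(1)[OF assms p] has_sum_boundary_law(1)[OF assms q] eq
    by (metis has_sum_unique)
  moreover have "snd p = snd q"
    using has_sum_boundary_law(2)[OF assms p] has_sum_boundary_law(2)[OF assms q] eq
    by (metis has_sum_unique)
  ultimately show "p = q" by (simp add: prod_eq_iff)
qed

lemma transl_inv_boundary_law_iff:
  assumes "lam summable_on Z0" "p \<in> reduced_solutions k (infsum lam Z0)"
  shows "transl_inv (boundary_law k lam p) \<longleftrightarrow> fst p = snd p"
proof
  assume "transl_inv (boundary_law k lam p)"
  then show "fst p = snd p"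
    using has_sum_boundary_law[OF assms] unfolding transl_inv_def by (metis has_sum_unique)
next
  assume "fst p = snd p"
  then show "transl_inv (boundary_law k lam p)"
    unfolding transl_inv_def by (cases p) simp
qed

lemma periodic_gibbs_subcritical:
  assumes "2 \<le> k" "\<forall>j. 0 < lam j" "lam summable_on Z0" "infsum lam Z0 \<le> Lambda_cr k"
  shows "\<exists>p. periodic_gibbs k lam = {p} \<and> transl_inv p"
proof -
  have "0 < infsum lam Z0"
    using assms(2,3) by (intro infsum_pos[of _ _ 1]) (auto simp: Z0_def less_imp_le)
  then obtain x where x: "reduced_solutions k (infsum lam Z0) = {(x, x)}"
    using reduced_solutions_subcritical assms(1,4) by blast
  then have "periodic_gibbs k lam = {boundary_law k lam (x, x)}"
    using periodic_gibbs_eq_image assms by simp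
  moreover have "transl_inv (boundary_law k lam (x, x))"
    unfolding transl_inv_def by simp
  ultimately show ?thesis by blast
qed

lemma periodic_gibbs_supercritical:
  assumes "2 \<le> k" "\<forall>j. 0 < lam j" "lam summable_on Z0" "Lambda_cr k < infsum lam Z0"
  shows "\<exists>p q r. periodic_gibbs k lam = {p, q, r} \<and> distinct [p, q, r] \<and>
    transl_inv p \<and> \<not> transl_inv q \<and> \<not> transl_inv r"
proof -
  obtain x S T where T_less: "T < S" and sol: "reduced_solutions k (infsum lam Z0) = {(x, x), (S, T), (T, S)}"
    using reduced_solutions_supercritical assms(1,4) by blast
  let ?bl = "boundary_law k lam"
  have "periodic_gibbs k lam = {?bl (x, x), ?bl (S, T), ?bl (T, S)}"
    using periodic_gibbs_eq_image assms sol by simp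
  moreover have "distinct [?bl (x, x), ?bl (S, T), ?bl (T, S)]"
    using inj_on_boundary_law[OF assms(3), of k] T_less unfolding sol by auto
  moreover have "transl_inv (?bl (x, x))" "\<not> transl_inv (?bl (S, T))" "\<not> transl_inv (?bl (T, S))"
    using transl_inv_boundary_law_iff[OF assms(3)] T_less sol by auto
  ultimately show ?thesis by blast
qed

theorem mainTheorem2:
  fixes k :: nat and lam :: "int \<Rightarrow> real"
  assumes "k \<ge> 2"
    and "\<forall>j. lam j > 0"
  shows "(lam summable_on Z0 \<longrightarrow>
            (infsum lam Z0 \<le> Lambda_cr k \<longrightarrow>
               (\<exists>!p. p \<in> periodic_gibbs k lam) \<and>
               (\<forall>p\<in>periodic_gibbs k lam. transl_inv p)) \<and>
            (infsum lam Z0 > Lambda_cr k \<longrightarrow>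
               finite (periodic_gibbs k lam) \<and> card (periodic_gibbs k lam) = 3 \<and>
               card {p\<in>periodic_gibbs k lam. transl_inv p} = 1))
       \<and> (\<not> lam summable_on Z0 \<longrightarrow> periodic_gibbs k lam = {})"
proof -
  have subcritical:
      "(\<exists>!p. p \<in> periodic_gibbs k lam) \<and> (\<forall>p\<in>periodic_gibbs k lam. transl_inv p)"
    if "lam summable_on Z0" "infsum lam Z0 \<le> Lambda_cr k"
    using periodic_gibbs_subcritical[OF assms that] by auto
  have supercritical: "finite (periodic_gibbs k lam) \<and> card (periodic_gibbs k lam) = 3 \<and>
      card {p\<in>periodic_gibbs k lam. transl_inv p} = 1"
    if summable: "lam summable_on Z0" and above: "Lambda_cr k < infsum lam Z0"
  proof -
    obtain p q r where pqr: "periodic_gibbs k lam = {p, q, r}" "distinct [p, q, r]"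
      and "transl_inv p" "\<not> transl_inv q" "\<not> transl_inv r"
      using periodic_gibbs_supercritical[OF assms summable above] by blast
    then have "{p\<in>periodic_gibbs k lam. transl_inv p} = {p}" by auto
    then show ?thesis using pqr by simp
  qed
  have "periodic_gibbs k lam = {}" if "\<not> lam summable_on Z0"
    using periodic_gibbs_imp_summable that by fast
  with subcritical supercritical show ?thesis by blast
qed

end
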